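(* Let $f:\mathbb{R}^n\to\mathbb{R}$ be differentiable, $\mu$-strongly convex, with $L$-Lipschitz gradient $\nabla f$, and let $x^*$ be its unique minimizer. Given $\varepsilon>0$, suppose $\alpha<\left(\frac{4\varepsilon\mu}{L^2n}\right)^{1/2}$. Let $\mathcal{E}^t$ denote the event $\|\nabla f(x^t)\|_\infty\le\eta$. If $x\in\mathbb{R}^n$ satisfies $f(x)-f(x^* )>\varepsilon$, then the iterate $x^{t+1}$ of Markov gradient descent satisfies $$\mathbb{E}\left[f(x^{t+1})\,\middle|\,x^t=x,\mathcal{E}^t\right]<f(x).$$
   Context: A differentiable $f$ is $\mu$-strongly convex if $\langle\nabla f(x)-\nabla f(y),x-y\rangle\ge\mu\|x-y\|_2^2$ for all $x,y$. Markov gradient descent (MGD) with lattice resolution $\alpha>0$ and normalizer $\eta>0$: start at $x^0\in\alpha\mathbb{Z}^n$; at step $t$, for each coordinate $i$, conditionally on $x^t$, $\Delta^t_i\in\{0,1\}$ is Bernoulli with $\mathbb{P}[\Delta^t_i=1\mid x^t]=\min(|\partial_i f(x^t)|/\eta,1)$, and $x^{t+1}_i=x^t_i-\alpha\,\mathrm{sgn}(\partial_i f(x^t))\Delta^t_i$. *)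

theory Defs
  imports "HOL-Analysis.Analysis" "HOL-Probability.Probability"
begin

definition mgd_step :: "(real^'n \<Rightarrow> real^'n) \<Rightarrow> real \<Rightarrow> real \<Rightarrow> real^'n \<Rightarrow> (real^'n) pmf" where
  "mgd_step grad \<alpha> \<eta> x =
     map_pmf (\<lambda>\<Delta>. \<chi> i. x $ i - \<alpha> * sgn (grad x $ i) * (if \<Delta> i then 1 else 0))
       (Pi_pmf UNIV False (\<lambda>i. bernoulli_pmf (min (\<bar>grad x $ i\<bar> / \<eta>) 1)))"

end

theory Submission
  imports Defs
begin

text \<open>By the descent lemma for an L-Lipschitz gradient, a lattice move changes f by at most
  the sum, over the coordinates i that move, of L alpha^2/2 - alpha |partial_i f(x)|. On the event
  each coordinate moves with probability |partial_i f(x)|/eta, so the expected change is at most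
  alpha/eta (L alpha/2 |grad f(x)|_1 - |grad f(x)|_2^2). Strong convexity gives the
  Polyak-Lojasiewicz bound |grad f(x)|_2^2 \<ge> 2 mu (f(x) - f(xstar)) > 2 mu epsilon, and together
  with |v|_1 \<le> sqrt n |v|_2 the step-size condition makes this drift negative.\<close>

lemma has_real_derivative_along_line:
  fixes f :: "'a::real_inner \<Rightarrow> real"
  assumes grad: "\<And>y. (f has_derivative (\<lambda>h. grad y \<bullet> h)) (at y)"
  shows "((\<lambda>t. f (x + t *\<^sub>R d)) has_real_derivative (grad (x + t *\<^sub>R d) \<bullet> d)) (at t)"
proof -
  have "((\<lambda>t. x + t *\<^sub>R d) has_derivative (\<lambda>h. h *\<^sub>R d)) (at t)"
    by (auto intro!: derivative_eq_intros)
  from has_derivative_compose[OF this grad]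
  show ?thesis
    unfolding has_field_derivative_def by (rule has_derivative_eq_rhs) auto
qed

lemma lipschitz_gradient_upper_bound:
  fixes f :: "'a::real_inner \<Rightarrow> real"
  assumes grad: "\<And>y. (f has_derivative (\<lambda>h. grad y \<bullet> h)) (at y)"
    and lipschitz: "\<And>y z. norm (grad y - grad z) \<le> L * norm (y - z)"
  shows "f y \<le> f x + grad x \<bullet> (y - x) + L / 2 * (norm (y - x))\<^sup>2"
proof -
  define d where "d = y - x"
  define \<phi> where "\<phi> t = f (x + t *\<^sub>R d) - t * (grad x \<bullet> d) - L / 2 * t\<^sup>2 * (norm d)\<^sup>2" for t
  have "\<phi> 1 \<le> \<phi> 0"
  proof (rule DERIV_nonpos_imp_nonincreasing[of 0 1])
    fix t :: real assume t: "0 \<le> t" "t \<le> 1"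
    have D: "(\<phi> has_real_derivative (grad (x + t *\<^sub>R d) \<bullet> d - grad x \<bullet> d - L * t * (norm d)\<^sup>2)) (at t)"
      unfolding \<phi>_def
      by (rule has_real_derivative_along_line[OF grad] derivative_eq_intros refl | simp)+
    have "(grad (x + t *\<^sub>R d) - grad x) \<bullet> d \<le> norm (grad (x + t *\<^sub>R d) - grad x) * norm d"
      by (rule norm_cauchy_schwarz)
    also have "\<dots> \<le> L * norm (t *\<^sub>R d) * norm d"
      using lipschitz[of "x + t *\<^sub>R d" x] by (simp add: mult_right_mono)
    also have "\<dots> = L * t * (norm d)\<^sup>2"
      using t by (simp add: power2_eq_square)
    finally have "grad (x + t *\<^sub>R d) \<bullet> d - grad x \<bullet> d - L * t * (norm d)\<^sup>2 \<le> 0"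
      by (simp add: inner_diff_left)
    with D show "\<exists>y. (\<phi> has_real_derivative y) (at t) \<and> y \<le> 0" by blast
  qed simp
  then show ?thesis unfolding \<phi>_def d_def by simp
qed

lemma strongly_convex_lower_bound:
  fixes f :: "'a::real_inner \<Rightarrow> real"
  assumes grad: "\<And>y. (f has_derivative (\<lambda>h. grad y \<bullet> h)) (at y)"
    and strongly_convex: "\<And>y z. (grad y - grad z) \<bullet> (y - z) \<ge> \<mu> * (norm (y - z))\<^sup>2"
  shows "f x + grad x \<bullet> (y - x) + \<mu> / 2 * (norm (y - x))\<^sup>2 \<le> f y"
proof -
  define d where "d = y - x"
  define \<phi> where "\<phi> t = f (x + t *\<^sub>R d) - t * (grad x \<bullet> d) - \<mu> / 2 * t\<^sup>2 * (norm d)\<^sup>2" for t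
  have "\<phi> 0 \<le> \<phi> 1"
  proof (rule DERIV_nonneg_imp_nondecreasing[of 0 1])
    fix t :: real assume t: "0 \<le> t" "t \<le> 1"
    have D: "(\<phi> has_real_derivative (grad (x + t *\<^sub>R d) \<bullet> d - grad x \<bullet> d - \<mu> * t * (norm d)\<^sup>2)) (at t)"
      unfolding \<phi>_def
      by (rule has_real_derivative_along_line[OF grad] derivative_eq_intros refl | simp)+
    have "\<mu> * t * (norm d)\<^sup>2 \<le> (grad (x + t *\<^sub>R d) - grad x) \<bullet> d"
    proof (cases "t = 0")
      case False
      have "t * (\<mu> * t * (norm d)\<^sup>2) = \<mu> * (norm (t *\<^sub>R d))\<^sup>2"
        using t by (simp add: power2_eq_square)
      also have "\<dots> \<le> t * ((grad (x + t *\<^sub>R d) - grad x) \<bullet> d)"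
        using strongly_convex[of "x + t *\<^sub>R d" x] by simp
      finally show ?thesis
        using t False by (simp add: mult_le_cancel_left)
    qed simp
    with D show "\<exists>y. (\<phi> has_real_derivative y) (at t) \<and> 0 \<le> y"
      by (auto simp: inner_diff_left)
  qed simp
  then show ?thesis unfolding \<phi>_def d_def by simp
qed

lemma strongly_convex_polyak_lojasiewicz:
  fixes f :: "'a::real_inner \<Rightarrow> real"
  assumes grad: "\<And>y. (f has_derivative (\<lambda>h. grad y \<bullet> h)) (at y)"
    and mu_pos: "\<mu> > 0"
    and strongly_convex: "\<And>y z. (grad y - grad z) \<bullet> (y - z) \<ge> \<mu> * (norm (y - z))\<^sup>2"
  shows "f x - f y \<le> (norm (grad x))\<^sup>2 / (2 * \<mu>)"
proof -
  \<comment> \<open>minimise the quadratic lower bound of strong convexity over the distance to y\<close>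
  have "- (norm (grad x))\<^sup>2 / (2 * \<mu>) \<le> - (norm (grad x) * norm (y - x)) + \<mu> / 2 * (norm (y - x))\<^sup>2"
    using mu_pos divide_nonneg_pos[OF zero_le_power2[of "\<mu> * norm (y - x) - norm (grad x)"], of "2 * \<mu>"]
    by (simp add: field_simps power2_eq_square)
  also have "\<dots> \<le> grad x \<bullet> (y - x) + \<mu> / 2 * (norm (y - x))\<^sup>2"
    using norm_cauchy_schwarz[of "- grad x" "y - x"] by simp
  also have "\<dots> \<le> f y - f x"
    using strongly_convex_lower_bound[OF grad strongly_convex, of x y] by simp
  finally show ?thesis by simp
qed

lemma lipschitz_constant_nonneg:
  fixes g :: "'a::euclidean_space \<Rightarrow> 'b::real_normed_vector"
  assumes "\<And>y z. norm (g y - g z) \<le> L * norm (y - z)"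
  shows "L \<ge> 0"
proof -
  obtain b :: 'a where "b \<in> Basis" using nonempty_Basis by blast
  then have "norm b = 1" by simp
  with assms[of b 0] have "norm (g b - g 0) \<le> L" by simp
  then show ?thesis using norm_ge_zero order_trans by blast
qed

lemma sum_abs_le_sqrt_card_mult_norm:
  fixes v :: "real^'n"
  shows "(\<Sum>i\<in>UNIV. \<bar>v $ i\<bar>) \<le> sqrt (real CARD('n)) * norm v"
  using L2_set_mult_ineq[of "\<lambda>i. \<bar>v $ i\<bar>" "\<lambda>_. 1" UNIV]
  by (simp add: norm_vec_def L2_set_constant mult.commute)

lemma mgd_move_upper_bound:
  fixes f :: "real^'n \<Rightarrow> real" and \<Delta> :: "'n \<Rightarrow> bool"
  assumes grad: "\<And>y. (f has_derivative (\<lambda>h. grad y \<bullet> h)) (at y)"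
    and lipschitz: "\<And>y z. norm (grad y - grad z) \<le> L * norm (y - z)"
  shows "f (\<chi> i. x $ i - \<alpha> * sgn (grad x $ i) * (if \<Delta> i then 1 else 0))
           \<le> f x + (\<Sum>i\<in>UNIV. of_bool (\<Delta> i) * (L * \<alpha>\<^sup>2 / 2 - \<alpha> * \<bar>grad x $ i\<bar>))"
proof -
  define g where "g = grad x"
  define y where "y = (\<chi> i. x $ i - \<alpha> * sgn (g $ i) * (if \<Delta> i then 1 else 0))"
  have step: "y - x = (\<chi> i. - of_bool (\<Delta> i) * \<alpha> * sgn (g $ i))"
    unfolding y_def by (simp add: vec_eq_iff)
  have inner: "g \<bullet> (y - x) = (\<Sum>i\<in>UNIV. of_bool (\<Delta> i) * (- \<alpha> * \<bar>g $ i\<bar>))"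
    unfolding step inner_vec_def by (intro sum.cong refl) (simp add: abs_sgn)
  have "(norm (y - x))\<^sup>2 \<le> (\<Sum>i\<in>UNIV. of_bool (\<Delta> i) * \<alpha>\<^sup>2)"
    unfolding power2_norm_eq_inner step inner_vec_def
    by (intro sum_mono) (auto simp: sgn_if power2_eq_square)
  then have "L / 2 * (norm (y - x))\<^sup>2 \<le> L / 2 * (\<Sum>i\<in>UNIV. of_bool (\<Delta> i) * \<alpha>\<^sup>2)"
    by (rule mult_left_mono) (simp add: lipschitz_constant_nonneg[OF lipschitz])
  also have "\<dots> = (\<Sum>i\<in>UNIV. of_bool (\<Delta> i) * (L * \<alpha>\<^sup>2 / 2))"
    unfolding sum_distrib_left by (rule sum.cong) simp_all
  finally have quadratic: "L / 2 * (norm (y - x))\<^sup>2 \<le> (\<Sum>i\<in>UNIV. of_bool (\<Delta> i) * (L * \<alpha>\<^sup>2 / 2))" .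
  have "f y \<le> f x + g \<bullet> (y - x) + L / 2 * (norm (y - x))\<^sup>2"
    unfolding g_def by (rule lipschitz_gradient_upper_bound[OF grad lipschitz])
  also have "\<dots> \<le> f x + ((\<Sum>i\<in>UNIV. of_bool (\<Delta> i) * (- \<alpha> * \<bar>g $ i\<bar>)) + (\<Sum>i\<in>UNIV. of_bool (\<Delta> i) * (L * \<alpha>\<^sup>2 / 2)))"
    using inner quadratic by linarith
  also have "\<dots> = f x + (\<Sum>i\<in>UNIV. of_bool (\<Delta> i) * (L * \<alpha>\<^sup>2 / 2 - \<alpha> * \<bar>g $ i\<bar>))"
    unfolding sum.distrib[symmetric] by (intro arg_cong[where f = "(+) (f x)"] sum.cong) (simp_all add: algebra_simps)
  finally show ?thesis
    unfolding y_def g_def .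
qed

lemma expectation_mgd_step_le:
  fixes f :: "real^'n \<Rightarrow> real"
  assumes grad: "\<And>y. (f has_derivative (\<lambda>h. grad y \<bullet> h)) (at y)"
    and lipschitz: "\<And>y z. norm (grad y - grad z) \<le> L * norm (y - z)"
    and eta_pos: "\<eta> > 0"
  shows "measure_pmf.expectation (mgd_step grad \<alpha> \<eta> x) f
           \<le> f x + (\<Sum>i\<in>UNIV. min (\<bar>grad x $ i\<bar> / \<eta>) 1 * (L * \<alpha>\<^sup>2 / 2 - \<alpha> * \<bar>grad x $ i\<bar>))"
proof -
  define p where "p i = min (\<bar>grad x $ i\<bar> / \<eta>) 1" for i
  define c where "c i = L * \<alpha>\<^sup>2 / 2 - \<alpha> * \<bar>grad x $ i\<bar>" for i
  define P where "P = Pi_pmf (UNIV :: 'n set) False (\<lambda>i. bernoulli_pmf (p i))"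
  have integrable: "integrable (measure_pmf P) F" for F :: "('n \<Rightarrow> bool) \<Rightarrow> real"
    by (rule integrable_measure_pmf_finite) simp
  have expectation_indicator: "measure_pmf.expectation P (\<lambda>\<Delta>. of_bool (\<Delta> i)) = p i" for i
  proof -
    have "map_pmf (\<lambda>\<Delta>. \<Delta> i) P = bernoulli_pmf (p i)"
      unfolding P_def by (simp add: Pi_pmf_component)
    moreover have "0 \<le> p i" "p i \<le> 1"
      unfolding p_def using eta_pos by auto
    ultimately show ?thesis
      using integral_map_pmf[of "\<lambda>\<Delta>. \<Delta> i" P "\<lambda>b. of_bool b :: real"] by simp
  qed
  have "measure_pmf.expectation (mgd_step grad \<alpha> \<eta> x) f
      = measure_pmf.expectation P (\<lambda>\<Delta>. f (\<chi> i. x $ i - \<alpha> * sgn (grad x $ i) * (if \<Delta> i then 1 else 0)))"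
    unfolding mgd_step_def P_def p_def by simp
  also have "\<dots> \<le> measure_pmf.expectation P (\<lambda>\<Delta>. f x + (\<Sum>i\<in>UNIV. of_bool (\<Delta> i) * c i))"
    unfolding c_def by (intro integral_mono integrable mgd_move_upper_bound[OF grad lipschitz])
  also have "\<dots> = f x + (\<Sum>i\<in>UNIV. p i * c i)"
    by (simp add: integrable expectation_indicator del: sum_of_bool_mult_eq)
  finally show ?thesis
    unfolding p_def c_def .
qed

lemma expectation_mgd_step_le_on_event:
  fixes f :: "real^'n \<Rightarrow> real"
  assumes grad: "\<And>y. (f has_derivative (\<lambda>h. grad y \<bullet> h)) (at y)"
    and lipschitz: "\<And>y z. norm (grad y - grad z) \<le> L * norm (y - z)"
    and eta_pos: "\<eta> > 0"
    and event: "\<And>i. \<bar>grad x $ i\<bar> \<le> \<eta>"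
  shows "measure_pmf.expectation (mgd_step grad \<alpha> \<eta> x) f
           \<le> f x - \<alpha> / \<eta> * ((norm (grad x))\<^sup>2 - L * \<alpha> / 2 * (\<Sum>i\<in>UNIV. \<bar>grad x $ i\<bar>))"
proof -
  define g where "g = grad x"
  have "(\<Sum>i\<in>UNIV. min (\<bar>g $ i\<bar> / \<eta>) 1 * (L * \<alpha>\<^sup>2 / 2 - \<alpha> * \<bar>g $ i\<bar>))
      = (\<Sum>i\<in>UNIV. \<alpha> / \<eta> * (L * \<alpha> / 2 * \<bar>g $ i\<bar> - g $ i * g $ i))"
    using event eta_pos unfolding g_def
    by (intro sum.cong refl) (simp add: field_simps power2_eq_square)
  also have "\<dots> = \<alpha> / \<eta> * (L * \<alpha> / 2 * (\<Sum>i\<in>UNIV. \<bar>g $ i\<bar>) - (\<Sum>i\<in>UNIV. g $ i * g $ i))"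
    by (simp only: sum_subtractf flip: sum_distrib_left)
  also have "\<dots> = - \<alpha> / \<eta> * ((norm g)\<^sup>2 - L * \<alpha> / 2 * (\<Sum>i\<in>UNIV. \<bar>g $ i\<bar>))"
    unfolding power2_norm_eq_inner inner_vec_def by (simp add: algebra_simps)
  finally show ?thesis
    using expectation_mgd_step_le[OF grad lipschitz eta_pos, of \<alpha> x] unfolding g_def by simp
qed

lemma small_step_sum_abs_less_norm_sq:
  fixes g :: "real^'n"
  assumes L_pos: "L > 0" and alpha_pos: "\<alpha> > 0" and kappa_pos: "\<kappa> > 0"
    and gradient_large: "2 * \<kappa> < (norm g)\<^sup>2"
    and alpha_small: "\<alpha> < sqrt (4 * \<kappa> / (L\<^sup>2 * real CARD('n)))"
  shows "L * \<alpha> / 2 * (\<Sum>i\<in>UNIV. \<bar>g $ i\<bar>) < (norm g)\<^sup>2"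
proof -
  define n where "n = real CARD('n)"
  have "\<alpha>\<^sup>2 < 4 * \<kappa> / (L\<^sup>2 * n)"
    using power_strict_mono[OF alpha_small, of 2] alpha_pos kappa_pos L_pos
    unfolding n_def by simp
  then have "(L * \<alpha> * sqrt n)\<^sup>2 < 4 * \<kappa>"
    using L_pos unfolding n_def by (simp add: field_simps power_mult_distrib)
  also have "\<dots> < (2 * norm g)\<^sup>2"
    using gradient_large kappa_pos by (simp add: power_mult_distrib)
  finally have step_small: "L * \<alpha> * sqrt n < 2 * norm g"
    by (rule power2_less_imp_less) simp
  have "L * \<alpha> / 2 * (\<Sum>i\<in>UNIV. \<bar>g $ i\<bar>) \<le> L * \<alpha> / 2 * (sqrt n * norm g)"
    using sum_abs_le_sqrt_card_mult_norm[of g] L_pos alpha_pos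
    unfolding n_def by (intro mult_left_mono) simp_all
  also have "\<dots> = (L * \<alpha> * sqrt n) * norm g / 2"
    by simp
  also have "\<dots> < (2 * norm g) * norm g / 2"
    using step_small gradient_large kappa_pos
    by (intro divide_strict_right_mono mult_strict_right_mono) auto
  also have "\<dots> = (norm g)\<^sup>2"
    by (simp add: power2_eq_square)
  finally show ?thesis .
qed

theorem corollary6p3:
  fixes f :: "real^'n \<Rightarrow> real" and grad :: "real^'n \<Rightarrow> real^'n"
    and \<mu> L \<epsilon> \<alpha> \<eta> :: real and xstar x :: "real^'n"
  assumes grad: "\<And>y. (f has_derivative (\<lambda>h. grad y \<bullet> h)) (at y)"
    and mu_pos: "\<mu> > 0"
    and strongly_convex: "\<And>y z. (grad y - grad z) \<bullet> (y - z) \<ge> \<mu> * (norm (y - z))\<^sup>2"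
    and lipschitz: "\<And>y z. norm (grad y - grad z) \<le> L * norm (y - z)"
    and minimizer: "\<And>y. f xstar \<le> f y"
    and eps_pos: "\<epsilon> > 0"
    and alpha_pos: "\<alpha> > 0"
    and eta_pos: "\<eta> > 0"
    and alpha_small: "\<alpha> < sqrt (4 * \<epsilon> * \<mu> / (L\<^sup>2 * real CARD('n)))"
    and event: "\<And>i. \<bar>grad x $ i\<bar> \<le> \<eta>"
    and gap: "f x - f xstar > \<epsilon>"
  shows "measure_pmf.expectation (mgd_step grad \<alpha> \<eta> x) f < f x"
proof -
  define g where "g = grad x"
  have "L \<noteq> 0"
    using alpha_small alpha_pos by auto
  with lipschitz_constant_nonneg[OF lipschitz] have L_pos: "L > 0" by simp
  \<comment> \<open>the Polyak-Lojasiewicz bound holds against every point\<close>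
  have "\<epsilon> < (norm g)\<^sup>2 / (2 * \<mu>)"
    using strongly_convex_polyak_lojasiewicz[OF grad mu_pos strongly_convex, of x xstar] gap
    unfolding g_def by linarith
  then have "2 * (\<epsilon> * \<mu>) < (norm g)\<^sup>2"
    using mu_pos by (simp add: field_simps)
  from small_step_sum_abs_less_norm_sq[OF L_pos alpha_pos _ this] alpha_small eps_pos mu_pos
  have "L * \<alpha> / 2 * (\<Sum>i\<in>UNIV. \<bar>g $ i\<bar>) < (norm g)\<^sup>2"
    by (simp add: mult.assoc)
  then have "0 < \<alpha> / \<eta> * ((norm g)\<^sup>2 - L * \<alpha> / 2 * (\<Sum>i\<in>UNIV. \<bar>g $ i\<bar>))"
    using alpha_pos eta_pos by simp
  with expectation_mgd_step_le_on_event[OF grad lipschitz eta_pos event, of \<alpha>]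
  show ?thesis
    unfolding g_def by linarith
qed

end
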